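(* Let $0<p,q<\infty$ and let $\mu$ be a $q$-reverse Carleson measure for $H^p(\mathbb{D})$. Let $\nu=\mu|_{\partial\mathbb{D}}$, regarded as a measure on $\mathbb{T}=\partial\mathbb{D}$. Then there is $C>0$ such that $\|f\|_{L^p(\mathbb{T},m)}\le C\|f\|_{L^q(\nu)}$ for every $f\in C(\mathbb{T})$.
   Context: $H^p=H^p(\mathbb{D})$ ($0<p<\infty$) is the space of holomorphic $f$ on the unit disc $\mathbb{D}$ with $\|f\|_{H^p}^p=\sup_{0<r<1}\int_0^1|f(re^{2\pi it})|^p\,dt<\infty$. $m$ is normalized Lebesgue measure on $\mathbb{T}$. For a quasi-Banach space $X$ of analytic functions on $\mathbb{D}$ and $0<q<\infty$, a finite positive Borel measure $\mu$ on $\overline{\mathbb{D}}$ is a $q$-reverse Carleson measure for $X$ if there is $C>0$ with $\|f\|_X\le C\|f\|_{L^q(\overline{\mathbb{D}},\mu)}$ for all $f\in X\cap C(\overline{\mathbb{D}})$. *)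

theory Defs
  imports "HOL-Analysis.Analysis"
begin

definition circle_borel :: "complex measure" where
  "circle_borel = restrict_space borel (sphere 0 1)"

definition circle_measure :: "complex measure" where
  "circle_measure = distr (restrict_space lborel {0..1}) circle_borel (\<lambda>t. cis (2 * pi * t))"

definition Hp_mean :: "real \<Rightarrow> (complex \<Rightarrow> complex) \<Rightarrow> real \<Rightarrow> ennreal" where
  "Hp_mean p f r = (\<integral>\<^sup>+ t \<in> {0..1}. ennreal (norm (f (of_real r * cis (2 * pi * t))) powr p) \<partial>lborel)"

definition Hp_norm_pow :: "real \<Rightarrow> (complex \<Rightarrow> complex) \<Rightarrow> ennreal" where
  "Hp_norm_pow p f = (SUP r \<in> {0<..<1}. Hp_mean p f r)"

definition Hp :: "real \<Rightarrow> (complex \<Rightarrow> complex) set" where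
  "Hp p = {f. f holomorphic_on ball 0 1 \<and> Hp_norm_pow p f < \<infinity>}"

text \<open>The H^p quasi-norm (only used for f in H^p, where it is finite).\<close>
definition Hp_norm :: "real \<Rightarrow> (complex \<Rightarrow> complex) \<Rightarrow> real" where
  "Hp_norm p f = enn2real (Hp_norm_pow p f) powr (1 / p)"

text \<open>The L^q(M) quasi-norm (only used where the integral is finite).\<close>
definition Lq_norm :: "'a measure \<Rightarrow> real \<Rightarrow> ('a \<Rightarrow> complex) \<Rightarrow> real" where
  "Lq_norm M q f = enn2real (\<integral>\<^sup>+ x. ennreal (norm (f x) powr q) \<partial>M) powr (1 / q)"

definition finite_borel_measure_closed_disc :: "complex measure \<Rightarrow> bool" where
  "finite_borel_measure_closed_disc \<mu> \<longleftrightarrow>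
     sets \<mu> = sets (restrict_space borel (cball 0 1)) \<and> finite_measure \<mu>"

definition reverse_carleson_Hp :: "real \<Rightarrow> real \<Rightarrow> complex measure \<Rightarrow> bool" where
  "reverse_carleson_Hp p q \<mu> \<longleftrightarrow> finite_borel_measure_closed_disc \<mu> \<and>
     (\<exists>C>0. \<forall>f. f \<in> Hp p \<and> continuous_on (cball 0 1) f \<longrightarrow>
               Hp_norm p f \<le> C * Lq_norm \<mu> q f)"

end

theory Submission
  imports Defs
begin

text \<open>A function \<open>F\<close> continuous on the closed disc satisfies \<open>\<parallel>F\<parallel>_L\<^sup>p(m) \<le> \<parallel>F\<parallel>_H\<^sup>p\<close>, since
  by uniform continuity the integral means over circles of radius \<open>r \<rightarrow> 1\<close> approach the boundary
  mean. Testing the reverse Carleson inequality on \<open>z\<^sup>n E\<close> for \<open>E\<close> in the disc algebra and letting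
  \<open>n \<rightarrow> \<infinity>\<close>, the \<open>\<mu>\<close>-mass of \<open>\<bar>z\<^sup>n E\<bar>\<^sup>q\<close> concentrates on the circle, which gives
  \<open>\<parallel>E\<parallel>_L\<^sup>p(m) \<le> C \<parallel>E\<parallel>_L\<^sup>q(\<nu>)\<close>. A continuous nonvanishing \<open>f\<close> on the circle is comparable to such
  an \<open>E\<close>: by Stone--Weierstrass there is an entire \<open>Q\<close> with \<open>\<bar>log \<bar>f\<bar> - Re Q\<bar> < 1\<close> on the circle,
  and \<open>E = exp Q\<close> satisfies \<open>\<bar>f\<bar> / e \<le> \<bar>E\<bar> \<le> e \<bar>f\<bar>\<close> there. A general continuous \<open>f\<close> is the
  limit of the nonvanishing functions \<open>\<bar>f\<bar> + 1/n\<close>.\<close>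

lemma Lq_norm_restrict_space:
  assumes "\<Omega> \<in> sets M"
  shows "Lq_norm (restrict_space M \<Omega>) q f = Lq_norm M q (\<lambda>x. indicator \<Omega> x * f x)"
proof -
  have "\<Omega> \<inter> space M \<in> sets M" using assms by auto
  then show ?thesis
    unfolding Lq_norm_def
    by (simp add: nn_integral_restrict_space) (intro arg_cong2[where f = "(powr)"] refl
          arg_cong[where f = enn2real] nn_integral_cong, simp split: split_indicator)
qed

lemma Lq_norm_eq_integral:
  assumes "integrable M (\<lambda>x. norm (f x) powr q)"
  shows "Lq_norm M q f = (\<integral>x. norm (f x) powr q \<partial>M) powr (1 / q)"
  unfolding Lq_norm_def using assms by (simp add: nn_integral_eq_integral integral_nonneg)

context finite_measure
begin

lemma integrable_powr_norm_bounded: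
  assumes "f \<in> borel_measurable M" and "\<And>x. x \<in> space M \<Longrightarrow> norm (f x) \<le> B" and "q > 0"
  shows "integrable M (\<lambda>x. norm (f x) powr q)"
  using assms by (intro integrable_const_bound[where B = "B powr q"] AE_I2) (auto intro!: powr_mono2)

lemma Lq_norm_mono:
  assumes f: "integrable M (\<lambda>x. norm (f x) powr q)" and g: "integrable M (\<lambda>x. norm (g x) powr q)"
    and "c \<ge> 0" and "q > 0" and le: "\<And>x. x \<in> space M \<Longrightarrow> norm (f x) \<le> c * norm (g x)"
  shows "Lq_norm M q f \<le> c * Lq_norm M q g"
proof -
  have "(\<integral>x. norm (f x) powr q \<partial>M) \<le> (\<integral>x. c powr q * norm (g x) powr q \<partial>M)"
  proof (rule integral_mono)
    fix x assume "x \<in> space M"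
    then have "norm (f x) powr q \<le> (c * norm (g x)) powr q"
      using le \<open>q > 0\<close> by (intro powr_mono2) auto
    then show "norm (f x) powr q \<le> c powr q * norm (g x) powr q"
      using \<open>c \<ge> 0\<close> by (simp add: powr_mult)
  qed (use f g in auto)
  then have "(\<integral>x. norm (f x) powr q \<partial>M) powr (1/q) \<le> (c powr q * (\<integral>x. norm (g x) powr q \<partial>M)) powr (1/q)"
    using \<open>q > 0\<close> by (intro powr_mono2) (auto simp: integral_nonneg)
  also have "\<dots> = c * (\<integral>x. norm (g x) powr q \<partial>M) powr (1/q)"
    using \<open>q > 0\<close> \<open>c \<ge> 0\<close> by (simp add: powr_mult powr_powr integral_nonneg)
  finally show ?thesis using f g by (simp add: Lq_norm_eq_integral)
qed

lemma Lq_norm_tendsto_bounded: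
  assumes meas: "\<And>n. f n \<in> borel_measurable M" "g \<in> borel_measurable M"
    and lim: "\<And>x. x \<in> space M \<Longrightarrow> (\<lambda>n. norm (f n x)) \<longlonglongrightarrow> norm (g x)"
    and bound: "\<And>n x. x \<in> space M \<Longrightarrow> norm (f n x) \<le> B" and "q > 0"
  shows "(\<lambda>n. Lq_norm M q (f n)) \<longlonglongrightarrow> Lq_norm M q g"
proof -
  have g_bound: "norm (g x) \<le> B" if "x \<in> space M" for x
    using lim[OF that] bound[OF that] by (intro LIMSEQ_le_const2[of "\<lambda>n. norm (f n x)"]) auto
  have "(\<lambda>n. \<integral>x. norm (f n x) powr q \<partial>M) \<longlonglongrightarrow> (\<integral>x. norm (g x) powr q \<partial>M)"
  proof (rule integral_dominated_convergence[where w = "\<lambda>_. B powr q"])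
    show "AE x in M. (\<lambda>n. norm (f n x) powr q) \<longlonglongrightarrow> norm (g x) powr q"
      using lim \<open>q > 0\<close> by (intro AE_I2 tendsto_powr') auto
    show "AE x in M. norm (norm (f n x) powr q) \<le> B powr q" for n
      using bound \<open>q > 0\<close> by (intro AE_I2) (auto intro: powr_mono2)
  qed (use meas in auto)
  then have "(\<lambda>n. (\<integral>x. norm (f n x) powr q \<partial>M) powr (1/q)) \<longlonglongrightarrow> (\<integral>x. norm (g x) powr q \<partial>M) powr (1/q)"
    using \<open>q > 0\<close> by (intro tendsto_powr') (auto simp: integral_nonneg)
  moreover have "integrable M (\<lambda>x. norm (f n x) powr q)" for n
    using meas bound \<open>q > 0\<close> by (intro integrable_powr_norm_bounded)
  moreover have "integrable M (\<lambda>x. norm (g x) powr q)"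
    using meas g_bound \<open>q > 0\<close> by (intro integrable_powr_norm_bounded)
  ultimately show ?thesis by (simp add: Lq_norm_eq_integral)
qed

end

locale compact_borel_measure = finite_measure M for M :: "'a::metric_space measure" +
  fixes S :: "'a set"
  assumes sets_eq: "sets M = sets (restrict_space borel S)" and compact_S: "compact S"
begin

lemma space_eq: "space M = S"
  by (metis sets_eq sets_eq_imp_space_eq space_borel space_restrict_space Int_UNIV_right)

lemma borel_measurable_continuous:
  fixes f :: "'a \<Rightarrow> 'b::topological_space"
  assumes "continuous_on S f"
  shows "f \<in> borel_measurable M"
  using borel_measurable_continuous_on_restrict[OF assms] measurable_cong_sets[OF sets_eq refl] by blast

lemma integrable_powr_norm_continuous:
  fixes f :: "'a \<Rightarrow> 'b::real_normed_vector"
  assumes "continuous_on S f" and "q > 0"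
  shows "integrable M (\<lambda>x. norm (f x) powr q)"
proof -
  obtain B where "\<And>x. x \<in> S \<Longrightarrow> norm (f x) \<le> B"
    using continuous_on_compact_bound[OF compact_S assms(1)] by blast
  then show ?thesis
    using assms by (intro integrable_powr_norm_bounded borel_measurable_continuous) (auto simp: space_eq)
qed

lemma Lq_norm_mono_continuous:
  assumes "continuous_on S f" and "continuous_on S g" and "c \<ge> 0" and "q > 0"
    and "\<And>x. x \<in> S \<Longrightarrow> norm (f x) \<le> c * norm (g x)"
  shows "Lq_norm M q f \<le> c * Lq_norm M q g"
  using assms by (intro Lq_norm_mono integrable_powr_norm_continuous) (auto simp: space_eq)

end

lemma measurable_circle_parametrization:
  "(\<lambda>t. cis (2 * pi * t)) \<in> restrict_space lborel {0..1} \<rightarrow>\<^sub>M circle_borel"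
  unfolding circle_borel_def
  by (intro measurable_restrict_space2 measurable_restrict_space1)
     (auto intro!: borel_measurable_continuous_onI continuous_intros)

lemma compact_borel_measure_circle: "compact_borel_measure circle_measure (sphere 0 1)"
  unfolding compact_borel_measure_def compact_borel_measure_axioms_def
proof (intro conjI)
  have "finite_measure (restrict_space lborel {0..1::real})"
    by (intro finite_measureI) (simp add: emeasure_restrict_space space_restrict_space)
  then show "finite_measure circle_measure"
    unfolding circle_measure_def
    by (intro finite_measure.finite_measure_distr measurable_circle_parametrization)
qed (simp_all add: circle_measure_def circle_borel_def)

lemma compact_borel_measure_closed_disc:
  assumes "finite_borel_measure_closed_disc \<mu>"
  shows "compact_borel_measure \<mu> (cball 0 1)"
  using assms unfolding finite_borel_measure_closed_disc_def compact_borel_measure_def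
    compact_borel_measure_axioms_def by auto

lemma sphere_in_sets_closed_disc:
  assumes "finite_borel_measure_closed_disc \<mu>"
  shows "sphere 0 1 \<in> sets \<mu>"
proof -
  have "sphere 0 1 = cball 0 1 \<inter> sphere (0::complex) 1" by auto
  then show ?thesis
    using assms unfolding finite_borel_measure_closed_disc_def sets_restrict_space
    by (auto intro: image_eqI[where x = "sphere 0 1"])
qed

lemma compact_borel_measure_restrict_boundary:
  assumes "finite_borel_measure_closed_disc \<mu>"
  shows "compact_borel_measure (restrict_space \<mu> (sphere 0 1)) (sphere 0 1)"
proof -
  interpret compact_borel_measure \<mu> "cball 0 1"
    using assms by (rule compact_borel_measure_closed_disc)
  have "sphere 0 1 \<in> sets \<mu>"
    using assms by (rule sphere_in_sets_closed_disc)
  moreover have "restrict_space (restrict_space borel (cball 0 1)) (sphere 0 1) =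
      restrict_space borel (sphere (0::complex) 1)"
  proof -
    have "cball 0 1 \<inter> sphere 0 1 = sphere (0::complex) 1" by auto
    then show ?thesis by (simp add: restrict_restrict_space)
  qed
  ultimately show ?thesis
    using sets_restrict_space_cong[OF sets_eq, of "sphere 0 1"]
      finite_measure_restrict_space[OF finite_measure_axioms]
    unfolding compact_borel_measure_def compact_borel_measure_axioms_def by simp
qed

lemma nn_integral_circle_measure:
  assumes "g \<in> borel_measurable circle_borel"
  shows "(\<integral>\<^sup>+z. g z \<partial>circle_measure) = (\<integral>\<^sup>+t\<in>{0..1}. g (cis (2 * pi * t)) \<partial>lborel)"
proof -
  have "(\<integral>\<^sup>+z. g z \<partial>circle_measure) = (\<integral>\<^sup>+t. g (cis (2 * pi * t)) \<partial>restrict_space lborel {0..1})"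
    unfolding circle_measure_def using assms measurable_circle_parametrization
    by (simp add: nn_integral_distr)
  then show ?thesis by (simp add: nn_integral_restrict_space)
qed

lemma Lq_norm_circle_eq_Hp_mean:
  assumes "continuous_on (sphere 0 1) F" and "p > 0"
  shows "Lq_norm circle_measure p F = enn2real (Hp_mean p F 1) powr (1 / p)"
proof -
  have "continuous_on (sphere 0 1) (\<lambda>z. norm (F z) powr p)"
    using assms by (intro continuous_on_powr' continuous_intros) auto
  then have "(\<lambda>z. ennreal (norm (F z) powr p)) \<in> borel_measurable circle_borel"
    unfolding circle_borel_def by (intro measurable_compose[OF _ measurable_ennreal]
        borel_measurable_continuous_on_restrict)
  then show ?thesis
    unfolding Lq_norm_def Hp_mean_def by (simp add: nn_integral_circle_measure)
qed

lemma continuous_on_cball_dilation_uniform: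
  fixes G :: "complex \<Rightarrow> 'a::metric_space"
  assumes "continuous_on (cball 0 1) G" and "e > 0"
  obtains r where "0 < r" "r < 1" "\<And>z. z \<in> sphere 0 1 \<Longrightarrow> dist (G (of_real r * z)) (G z) < e"
proof -
  obtain d where "d > 0" and d: "\<And>x x'. x \<in> cball 0 1 \<Longrightarrow> x' \<in> cball 0 1 \<Longrightarrow> dist x' x < d \<Longrightarrow> dist (G x') (G x) < e"
    using compact_uniformly_continuous[OF assms(1)] \<open>e > 0\<close> unfolding uniformly_continuous_on_def
    by (metis compact_cball)
  define r where "r = max (1/2) (1 - d/2)"
  have r: "0 < r" "r < 1" "1 - r < d" using \<open>d > 0\<close> by (auto simp: r_def)
  have "dist (G (of_real r * z)) (G z) < e" if "z \<in> sphere 0 1" for z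
  proof (rule d)
    have "dist (of_real r * z) z = norm (of_real (r - 1) * z)"
      by (simp add: dist_norm algebra_simps)
    also have "\<dots> = 1 - r" using that r by (simp add: norm_mult del: of_real_diff)
    finally show "dist (of_real r * z) z < d" using r by simp
  qed (use that r in \<open>auto simp: norm_mult\<close>)
  with r that show ?thesis by blast
qed

lemma continuous_radial_restriction:
  assumes "continuous_on (cball 0 1) F" and "p > 0" and "0 \<le> r" "r \<le> 1"
  shows "continuous_on UNIV (\<lambda>t. norm (F (of_real r * cis (2 * pi * t))) powr p)"
proof -
  have "continuous_on UNIV (\<lambda>t. F (of_real r * cis (2 * pi * t)))"
    by (rule continuous_on_compose2[OF assms(1)]) (use assms in \<open>auto intro!: continuous_intros simp: norm_mult\<close>)
  then show ?thesis using \<open>p > 0\<close> by (intro continuous_on_powr' continuous_intros) auto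
qed

lemma Hp_norm_pow_finite_continuous:
  assumes "continuous_on (cball 0 1) F" and "p > 0"
  shows "Hp_norm_pow p F < \<infinity>"
proof -
  obtain B where B: "\<And>z. z \<in> cball 0 1 \<Longrightarrow> norm (F z) \<le> B"
    using continuous_on_compact_bound[OF compact_cball assms(1)] by blast
  have "Hp_mean p F r \<le> ennreal (B powr p)" if "r \<in> {0<..<1}" for r
  proof -
    have "Hp_mean p F r \<le> (\<integral>\<^sup>+t\<in>{0..1::real}. ennreal (B powr p) \<partial>lborel)"
      unfolding Hp_mean_def
      by (intro nn_integral_mono) (use that B \<open>p > 0\<close> in \<open>auto simp: norm_mult indicator_def intro!: powr_mono2\<close>)
    then show ?thesis by (simp add: nn_integral_cmult_indicator)
  qed
  then have "Hp_norm_pow p F \<le> ennreal (B powr p)"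
    unfolding Hp_norm_pow_def by (rule SUP_least)
  then show ?thesis using order_le_less_trans by fastforce
qed

lemma Hp_mean_boundary_le_Hp_norm_pow:
  assumes "continuous_on (cball 0 1) F" and "p > 0"
  shows "Hp_mean p F 1 \<le> Hp_norm_pow p F"
proof (rule ennreal_le_epsilon)
  fix e :: real assume "e > 0"
  define G where "G z = norm (F z) powr p" for z
  have "continuous_on (cball 0 1) G"
    unfolding G_def using assms by (intro continuous_on_powr' continuous_intros) auto
  then obtain r where r: "0 < r" "r < 1" and close: "\<And>z. z \<in> sphere 0 1 \<Longrightarrow> dist (G (of_real r * z)) (G z) < e"
    using continuous_on_cball_dilation_uniform \<open>e > 0\<close> by blast
  have [measurable]: "(\<lambda>t. ennreal (norm (F (of_real r * cis (2 * pi * t))) powr p)) \<in> borel_measurable borel"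
    using continuous_radial_restriction[OF assms, of r] r
    by (intro measurable_compose[OF _ measurable_ennreal] borel_measurable_continuous_onI) auto
  have "Hp_mean p F 1 \<le> (\<integral>\<^sup>+t\<in>{0..1}. (ennreal (G (of_real r * cis (2 * pi * t))) + ennreal e) \<partial>lborel)"
    unfolding Hp_mean_def
  proof (rule nn_integral_mono)
    fix t
    have "G (cis (2 * pi * t)) \<le> G (of_real r * cis (2 * pi * t)) + e"
      using close[of "cis (2 * pi * t)"] by (simp add: dist_real_def)
    then show "ennreal (norm (F (of_real 1 * cis (2 * pi * t))) powr p) * indicator {0..1} t
        \<le> (ennreal (G (of_real r * cis (2 * pi * t))) + ennreal e) * indicator {0..1} t"
      using \<open>e > 0\<close> by (auto simp: G_def indicator_def simp flip: ennreal_plus intro!: ennreal_leI)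
  qed
  also have "\<dots> = Hp_mean p F r + ennreal e"
    unfolding Hp_mean_def G_def distrib_right
    by (subst nn_integral_add) (measurable, simp add: nn_integral_cmult_indicator)
  also have "Hp_mean p F r \<le> Hp_norm_pow p F"
    unfolding Hp_norm_pow_def using r by (intro SUP_upper) auto
  finally show "Hp_mean p F 1 \<le> Hp_norm_pow p F + ennreal e" by (simp add: add_right_mono)
qed

lemma Lq_norm_circle_le_Hp_norm:
  assumes "continuous_on (cball 0 1) F" and "p > 0"
  shows "Lq_norm circle_measure p F \<le> Hp_norm p F"
proof -
  have "continuous_on (sphere 0 1) F" using assms(1) by (rule continuous_on_subset) auto
  then have "Lq_norm circle_measure p F = enn2real (Hp_mean p F 1) powr (1 / p)"
    using assms(2) by (rule Lq_norm_circle_eq_Hp_mean)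
  also have "\<dots> \<le> enn2real (Hp_norm_pow p F) powr (1 / p)"
    using assms Hp_norm_pow_finite_continuous[OF assms]
    by (intro powr_mono2 enn2real_mono Hp_mean_boundary_le_Hp_norm_pow) auto
  finally show ?thesis unfolding Hp_norm_def .
qed

lemma in_Hp_continuous_on_cball:
  assumes "f holomorphic_on ball 0 1" and "continuous_on (cball 0 1) f" and "p > 0"
  shows "f \<in> Hp p"
  using assms Hp_norm_pow_finite_continuous unfolding Hp_def by blast

lemma reverse_carleson_disc_algebra:
  assumes "p > 0" and "q > 0" and \<mu>: "finite_borel_measure_closed_disc \<mu>"
    and C: "\<forall>f. f \<in> Hp p \<and> continuous_on (cball 0 1) f \<longrightarrow> Hp_norm p f \<le> C * Lq_norm \<mu> q f"
    and E: "E holomorphic_on ball 0 1" "continuous_on (cball 0 1) E"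
  shows "Lq_norm circle_measure p E \<le> C * Lq_norm (restrict_space \<mu> (sphere 0 1)) q E"
proof -
  interpret compact_borel_measure \<mu> "cball 0 1"
    using \<mu> by (rule compact_borel_measure_closed_disc)
  define F where "F n z = z ^ n * E z" for n z
  have F: "F n holomorphic_on ball 0 1" "continuous_on (cball 0 1) (F n)" for n
    unfolding F_def using E by (auto intro!: holomorphic_intros continuous_intros)
  have "Lq_norm circle_measure p E = Lq_norm circle_measure p (F n)" for n
  proof -
    have "space circle_measure = sphere 0 1"
      using compact_borel_measure.space_eq[OF compact_borel_measure_circle] .
    then have "(\<integral>\<^sup>+z. ennreal (norm (E z) powr p) \<partial>circle_measure) =
        (\<integral>\<^sup>+z. ennreal (norm (F n z) powr p) \<partial>circle_measure)"
      by (intro nn_integral_cong) (simp add: F_def norm_mult norm_power)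
    then show ?thesis unfolding Lq_norm_def by simp
  qed
  also have "\<dots> n \<le> Hp_norm p (F n)" for n
    using F(2) \<open>p > 0\<close> by (rule Lq_norm_circle_le_Hp_norm)
  also have "\<dots> n \<le> C * Lq_norm \<mu> q (F n)" for n
    using C in_Hp_continuous_on_cball[OF F \<open>p > 0\<close>] F(2) by simp
  finally have le: "Lq_norm circle_measure p E \<le> C * Lq_norm \<mu> q (F n)" for n .
  obtain B where B: "\<And>z. z \<in> cball 0 1 \<Longrightarrow> norm (E z) \<le> B"
    using continuous_on_compact_bound[OF compact_cball E(2)] by blast
  have "(\<lambda>n. Lq_norm \<mu> q (F n)) \<longlonglongrightarrow> Lq_norm \<mu> q (\<lambda>z. indicator (sphere 0 1) z * E z)"
  proof (rule Lq_norm_tendsto_bounded)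
    show "(\<lambda>z. indicator (sphere 0 1) z * E z) \<in> borel_measurable \<mu>"
      using sphere_in_sets_closed_disc[OF \<mu>] borel_measurable_continuous[OF E(2)]
      by (intro borel_measurable_times borel_measurable_indicator)
    fix z assume "z \<in> space \<mu>"
    then have z: "norm z \<le> 1" by (simp add: space_eq)
    show "norm (F n z) \<le> B" for n
    proof -
      have "norm z ^ n * norm (E z) \<le> norm (E z)"
        using z by (intro mult_left_le_one_le) (auto intro: power_le_one)
      then show ?thesis using B[of z] z by (simp add: F_def norm_mult norm_power)
    qed
    show "(\<lambda>n. norm (F n z)) \<longlonglongrightarrow> norm (indicator (sphere 0 1) z * E z)"
    proof (cases "norm z = 1")
      case False
      then have "(\<lambda>n. norm z ^ n * norm (E z)) \<longlonglongrightarrow> 0 * norm (E z)"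
        using z by (intro tendsto_intros LIMSEQ_power_zero) auto
      then show ?thesis using False by (simp add: F_def norm_mult norm_power)
    qed (simp add: F_def norm_mult norm_power)
  qed (use borel_measurable_continuous[OF F(2)] \<open>q > 0\<close> in auto)
  then have "(\<lambda>n. C * Lq_norm \<mu> q (F n)) \<longlonglongrightarrow> C * Lq_norm (restrict_space \<mu> (sphere 0 1)) q E"
    by (simp add: tendsto_mult_left Lq_norm_restrict_space[OF sphere_in_sets_closed_disc[OF \<mu>]])
  then show ?thesis using le by (intro LIMSEQ_le_const) auto
qed

text \<open>A list of triples \<open>(c, j, k)\<close> encodes the polynomial \<open>\<Sum> c z\<^sup>j (cnj z)\<^sup>k\<close> in \<open>z\<close> and its
  conjugate. On the unit circle \<open>cnj z = 1/z\<close>, so its real part coincides there with the real part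
  of the polynomial \<open>zcnj_poly_analytic\<close> in \<open>z\<close> alone.\<close>

definition zcnj_poly :: "(complex \<times> nat \<times> nat) list \<Rightarrow> complex \<Rightarrow> complex" where
  "zcnj_poly L z = (\<Sum>(c, j, k)\<leftarrow>L. c * z ^ j * cnj z ^ k)"

definition zcnj_poly_mult ::
    "(complex \<times> nat \<times> nat) list \<Rightarrow> (complex \<times> nat \<times> nat) list \<Rightarrow> (complex \<times> nat \<times> nat) list" where
  "zcnj_poly_mult L M = [(c * d, j + j', k + k'). (c, j, k) \<leftarrow> L, (d, j', k') \<leftarrow> M]"

definition zcnj_poly_cnj :: "(complex \<times> nat \<times> nat) list \<Rightarrow> (complex \<times> nat \<times> nat) list" where
  "zcnj_poly_cnj L = map (\<lambda>(c, j, k). (cnj c, k, j)) L"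

definition zcnj_poly_analytic :: "(complex \<times> nat \<times> nat) list \<Rightarrow> complex \<Rightarrow> complex" where
  "zcnj_poly_analytic L z = (\<Sum>(c, j, k)\<leftarrow>L. if k \<le> j then c * z ^ (j - k) else cnj c * z ^ (k - j))"

lemma zcnj_poly_Nil [simp]: "zcnj_poly [] z = 0"
  and zcnj_poly_Cons [simp]: "zcnj_poly ((c, j, k) # L) z = c * z ^ j * cnj z ^ k + zcnj_poly L z"
  and zcnj_poly_append [simp]: "zcnj_poly (L @ M) z = zcnj_poly L z + zcnj_poly M z"
  by (simp_all add: zcnj_poly_def)

lemma zcnj_poly_mult: "zcnj_poly (zcnj_poly_mult L M) z = zcnj_poly L z * zcnj_poly M z"
proof (induction L)
  case (Cons a L)
  have "zcnj_poly (map (\<lambda>(d, j', k'). (c * d, j + j', k + k')) M) z = c * z ^ j * cnj z ^ k * zcnj_poly M z"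
    for c j k by (induction M) (auto simp: algebra_simps power_add)
  with Cons show ?case by (cases a) (simp add: zcnj_poly_mult_def algebra_simps)
qed (simp add: zcnj_poly_mult_def)

lemma zcnj_poly_cnj: "zcnj_poly (zcnj_poly_cnj L) z = cnj (zcnj_poly L z)"
  by (induction L) (auto simp: zcnj_poly_cnj_def)

lemma continuous_on_zcnj_poly: "continuous_on S (zcnj_poly L)"
  by (induction L) (auto simp: zcnj_poly_def intro!: continuous_intros)

lemma zcnj_poly_analytic_Nil [simp]: "zcnj_poly_analytic [] z = 0"
  and zcnj_poly_analytic_Cons [simp]: "zcnj_poly_analytic ((c, j, k) # L) z =
    (if k \<le> j then c * z ^ (j - k) else cnj c * z ^ (k - j)) + zcnj_poly_analytic L z"
  by (simp_all add: zcnj_poly_analytic_def)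

lemma zcnj_poly_analytic_holomorphic: "zcnj_poly_analytic L holomorphic_on UNIV"
proof (induction L)
  case (Cons a L)
  obtain c j k where a: "a = (c, j, k)" by (cases a)
  from Cons show ?case
    unfolding a by (cases "k \<le> j") (simp_all add: holomorphic_intros)
qed (simp add: zcnj_poly_analytic_def)

lemma Re_monomial_sphere:
  assumes "norm z = 1"
  shows "Re (c * z ^ j * cnj z ^ k) = Re (if k \<le> j then c * z ^ (j - k) else cnj c * z ^ (k - j))"
proof -
  have unit: "z * cnj z = 1"
    using assms by (simp add: complex_norm_square[symmetric])
  show ?thesis
  proof (cases "k \<le> j")
    case True
    then have "c * z ^ j * cnj z ^ k = c * z ^ (j - k) * (z * cnj z) ^ k"
      by (simp add: power_mult_distrib flip: power_add)
    then have "c * z ^ j * cnj z ^ k = c * z ^ (j - k)" by (simp add: unit)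
    with True show ?thesis by (simp only: if_True)
  next
    case False
    then have "c * z ^ j * cnj z ^ k = cnj (cnj c * z ^ (k - j)) * (z * cnj z) ^ j"
      by (simp add: power_mult_distrib flip: power_add)
    then have "c * z ^ j * cnj z ^ k = cnj (cnj c * z ^ (k - j))" by (simp add: unit)
    with False show ?thesis by (simp only: cnj.sel(1) if_False)
  qed
qed

lemma Re_zcnj_poly_sphere: "norm z = 1 \<Longrightarrow> Re (zcnj_poly L z) = Re (zcnj_poly_analytic L z)"
proof (induction L)
  case (Cons a L)
  then show ?case by (cases a) (simp only: zcnj_poly_Cons zcnj_poly_analytic_Cons plus_complex.sel Re_monomial_sphere)
qed simp

lemma sphere_approx_Re_entire:
  assumes "continuous_on (sphere 0 1) h" and "e > 0"
  obtains Q where "Q holomorphic_on UNIV" "\<And>z. z \<in> sphere 0 1 \<Longrightarrow> \<bar>h z - Re (Q z)\<bar> < e"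
proof -
  define R where "R = range (\<lambda>L z. Re (zcnj_poly L z))"
  have in_R: "f \<in> R" if "\<And>z. f z = Re (zcnj_poly L z)" for f L
    unfolding R_def using that by blast
  interpret function_ring_on R "sphere (0::complex) 1"
  proof
    show "continuous_on (sphere 0 1) f" if "f \<in> R" for f
      using that unfolding R_def by (auto intro!: continuous_intros continuous_on_zcnj_poly)
    show "(\<lambda>x. f x + g x) \<in> R" if "f \<in> R" "g \<in> R" for f g
    proof -
      obtain L M where "f = (\<lambda>z. Re (zcnj_poly L z))" "g = (\<lambda>z. Re (zcnj_poly M z))"
        using \<open>f \<in> R\<close> \<open>g \<in> R\<close> unfolding R_def by blast
      then show ?thesis by (intro in_R[where L = "L @ M"]) simp
    qed
    show "(\<lambda>x. f x * g x) \<in> R" if "f \<in> R" "g \<in> R" for f g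
    proof -
      obtain L M where "f = (\<lambda>z. Re (zcnj_poly L z))" "g = (\<lambda>z. Re (zcnj_poly M z))"
        using \<open>f \<in> R\<close> \<open>g \<in> R\<close> unfolding R_def by blast
      \<comment> \<open>\<open>Re a * Re b = Re (a * (b + cnj b) / 2)\<close>\<close>
      then show ?thesis
        by (intro in_R[where L = "zcnj_poly_mult [(1/2, 0, 0)] (zcnj_poly_mult L (M @ zcnj_poly_cnj M))"])
           (simp add: zcnj_poly_mult zcnj_poly_cnj algebra_simps add_divide_distrib [symmetric])
    qed
    show "(\<lambda>_. c) \<in> R" for c
      by (rule in_R[where L = "[(of_real c, 0, 0)]"]) simp
    show "\<exists>f\<in>R. f x \<noteq> f y" if "x \<noteq> y" for x y
    proof -
      have "(\<lambda>z. Re z) \<in> R" "(\<lambda>z. Im z) \<in> R"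
        by (rule in_R[where L = "[(1, 1, 0)]"], simp) (rule in_R[where L = "[(- \<i>, 1, 0)]"], simp)
      with that show ?thesis by (metis complex_eqI)
    qed
  qed simp
  obtain g where "g \<in> R" and g: "\<forall>z\<in>sphere 0 1. \<bar>h z - g z\<bar> < e"
    using Stone_Weierstrass_basic[OF assms] by blast
  then obtain L where "g = (\<lambda>z. Re (zcnj_poly L z))" unfolding R_def by blast
  then show ?thesis
    using that[OF zcnj_poly_analytic_holomorphic] g Re_zcnj_poly_sphere by force
qed

lemma reverse_carleson_boundary_nonvanishing:
  assumes "p > 0" and "q > 0" and "C \<ge> 0" and \<mu>: "finite_borel_measure_closed_disc \<mu>"
    and C: "\<forall>f. f \<in> Hp p \<and> continuous_on (cball 0 1) f \<longrightarrow> Hp_norm p f \<le> C * Lq_norm \<mu> q f"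
    and f: "continuous_on (sphere 0 1) f" and nonzero: "\<And>z. z \<in> sphere 0 1 \<Longrightarrow> f z \<noteq> 0"
  shows "Lq_norm circle_measure p f \<le> exp 2 * C * Lq_norm (restrict_space \<mu> (sphere 0 1)) q f"
proof -
  interpret m: compact_borel_measure circle_measure "sphere 0 1"
    by (rule compact_borel_measure_circle)
  interpret \<nu>: compact_borel_measure "restrict_space \<mu> (sphere 0 1)" "sphere 0 1"
    using \<mu> by (rule compact_borel_measure_restrict_boundary)
  have "continuous_on (sphere 0 1) (\<lambda>z. ln (norm (f z)))"
    using f nonzero by (intro continuous_intros) auto
  then obtain Q where Q: "Q holomorphic_on UNIV"
    and approx: "\<And>z. z \<in> sphere 0 1 \<Longrightarrow> \<bar>ln (norm (f z)) - Re (Q z)\<bar> < 1"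
    using sphere_approx_Re_entire zero_less_one by blast
  define E where "E z = exp (Q z)" for z
  have E: "E holomorphic_on UNIV" unfolding E_def using Q by (intro holomorphic_intros)
  then have E_cont: "continuous_on S E" for S
    using holomorphic_on_imp_continuous_on continuous_on_subset by blast
  have f_le_E: "norm (f z) \<le> exp 1 * norm (E z)" and E_le_f: "norm (E z) \<le> exp 1 * norm (f z)"
    if "z \<in> sphere 0 1" for z
  proof -
    have pos: "norm (f z) > 0" and E: "norm (E z) = exp (Re (Q z))"
      using nonzero[OF that] by (simp_all add: E_def)
    have "norm (f z) = exp (ln (norm (f z)))" using pos by simp
    also have "\<dots> \<le> exp (1 + Re (Q z))" using approx[OF that] by simp
    finally show "norm (f z) \<le> exp 1 * norm (E z)" by (simp add: E exp_add)
    have "norm (E z) \<le> exp (1 + ln (norm (f z)))" using approx[OF that] by (simp add: E)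
    then show "norm (E z) \<le> exp 1 * norm (f z)" using pos by (simp add: exp_add)
  qed
  have "Lq_norm circle_measure p f \<le> exp 1 * Lq_norm circle_measure p E"
    using f E_cont \<open>p > 0\<close> f_le_E by (intro m.Lq_norm_mono_continuous) auto
  also have "\<dots> \<le> exp 1 * (C * Lq_norm (restrict_space \<mu> (sphere 0 1)) q E)"
    using \<open>p > 0\<close> \<open>q > 0\<close> \<mu> C holomorphic_on_subset[OF E] E_cont
    by (intro mult_left_mono reverse_carleson_disc_algebra) auto
  also have "\<dots> \<le> exp 1 * (C * (exp 1 * Lq_norm (restrict_space \<mu> (sphere 0 1)) q f))"
    using f E_cont \<open>q > 0\<close> \<open>C \<ge> 0\<close> E_le_f
    by (intro mult_left_mono \<nu>.Lq_norm_mono_continuous) auto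
  also have "\<dots> = exp 2 * C * Lq_norm (restrict_space \<mu> (sphere 0 1)) q f"
    by (simp add: exp_add [of 1 1, simplified] mult_ac)
  finally show ?thesis .
qed

lemma reverse_carleson_boundary_continuous:
  assumes "p > 0" and "q > 0" and "C \<ge> 0" and \<mu>: "finite_borel_measure_closed_disc \<mu>"
    and Carleson: "\<forall>f. f \<in> Hp p \<and> continuous_on (cball 0 1) f \<longrightarrow> Hp_norm p f \<le> C * Lq_norm \<mu> q f"
    and f: "continuous_on (sphere 0 1) f"
  shows "Lq_norm circle_measure p f \<le> exp 2 * C * Lq_norm (restrict_space \<mu> (sphere 0 1)) q f"
proof -
  interpret m: compact_borel_measure circle_measure "sphere 0 1"
    by (rule compact_borel_measure_circle)
  interpret \<nu>: compact_borel_measure "restrict_space \<mu> (sphere 0 1)" "sphere 0 1"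
    using \<mu> by (rule compact_borel_measure_restrict_boundary)
  define g where "g n z = complex_of_real (norm (f z) + 1 / Suc n)" for n z
  have g: "continuous_on (sphere 0 1) (g n)" "norm (g n z) = norm (f z) + 1 / Suc n" for n z
    unfolding g_def norm_of_real using f by (auto intro!: continuous_intros)
  have g_nonzero: "g n z \<noteq> 0" for n z
  proof -
    have "norm (g n z) > 0" unfolding g(2) by (intro add_nonneg_pos) auto
    then show ?thesis by auto
  qed
  have "Lq_norm circle_measure p f \<le> Lq_norm circle_measure p (g n)" for n
    using m.Lq_norm_mono_continuous[of f "g n" 1 p] f g \<open>p > 0\<close> by simp
  also have "\<dots> n \<le> exp 2 * C * Lq_norm (restrict_space \<mu> (sphere 0 1)) q (g n)" for n
    using assms(1-3) \<mu> Carleson g(1) g_nonzero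
    by (intro reverse_carleson_boundary_nonvanishing) auto
  finally have le: "Lq_norm circle_measure p f \<le> exp 2 * C * Lq_norm (restrict_space \<mu> (sphere 0 1)) q (g n)" for n .
  obtain B where B: "\<And>z. z \<in> sphere 0 1 \<Longrightarrow> norm (f z) \<le> B"
    using continuous_on_compact_bound[OF compact_sphere f] by blast
  have "(\<lambda>n. Lq_norm (restrict_space \<mu> (sphere 0 1)) q (g n)) \<longlonglongrightarrow> Lq_norm (restrict_space \<mu> (sphere 0 1)) q f"
  proof (rule \<nu>.Lq_norm_tendsto_bounded[where B = "B + 1"])
    show "g n \<in> borel_measurable (restrict_space \<mu> (sphere 0 1))" for n
      using g(1) by (rule \<nu>.borel_measurable_continuous)
    show "f \<in> borel_measurable (restrict_space \<mu> (sphere 0 1))"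
      using f by (rule \<nu>.borel_measurable_continuous)
    fix n z assume "z \<in> space (restrict_space \<mu> (sphere 0 1))"
    then have "z \<in> sphere 0 1" by (simp add: \<nu>.space_eq)
    have "(\<lambda>n. 1 / real (Suc n)) \<longlonglongrightarrow> 0"
      using LIMSEQ_inverse_real_of_nat by (simp add: inverse_eq_divide)
    from tendsto_add[OF tendsto_const this]
    show "(\<lambda>n. norm (g n z)) \<longlonglongrightarrow> norm (f z)" by (simp add: g(2))
    show "norm (g n z) \<le> B + 1"
      using B[OF \<open>z \<in> sphere 0 1\<close>] by (simp add: g(2) add_mono)
  qed (rule \<open>q > 0\<close>)
  then have "(\<lambda>n. exp 2 * C * Lq_norm (restrict_space \<mu> (sphere 0 1)) q (g n))
      \<longlonglongrightarrow> exp 2 * C * Lq_norm (restrict_space \<mu> (sphere 0 1)) q f"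
    by (rule tendsto_mult_left)
  then show ?thesis by (rule LIMSEQ_le_const) (use le in auto)
qed

theorem lemma3p2:
  fixes p q :: real and \<mu> :: "complex measure"
  assumes "0 < p" and "0 < q"
    and "reverse_carleson_Hp p q \<mu>"
  shows "\<exists>C>0. \<forall>f :: complex \<Rightarrow> complex. continuous_on (sphere 0 1) f \<longrightarrow>
           Lq_norm circle_measure p f \<le> C * Lq_norm (restrict_space \<mu> (sphere 0 1)) q f"
proof -
  obtain C where "C > 0" and \<mu>: "finite_borel_measure_closed_disc \<mu>"
    and Carleson: "\<forall>f. f \<in> Hp p \<and> continuous_on (cball 0 1) f \<longrightarrow> Hp_norm p f \<le> C * Lq_norm \<mu> q f"
    using assms(3) unfolding reverse_carleson_Hp_def by blast
  have "Lq_norm circle_measure p f \<le> exp 2 * C * Lq_norm (restrict_space \<mu> (sphere 0 1)) q f"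
    if "continuous_on (sphere 0 1) f" for f
    using assms(1,2) less_imp_le[OF \<open>C > 0\<close>] \<mu> Carleson that
    by (rule reverse_carleson_boundary_continuous)
  then show ?thesis using \<open>C > 0\<close> by (intro exI[of _ "exp 2 * C"]) auto
qed

end
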